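(* Let $q$ be a prime power. If $M$ is a round matroid that contains a $U_{2,q+2}$-restriction and a $\mathrm{PG}(2,q)$-restriction, then $M$ has a $U_{2,q^2+1}$-minor.
   Context: A matroid $M$ is round if $E(M)$ cannot be partitioned into two sets each of rank less than $r(M)$. $\mathrm{PG}(2,q)$ is the projective plane over $\mathrm{GF}(q)$; $U_{2,m}$ is the uniform matroid of rank $2$ on $m$ elements. *)

theory Defs
  imports "HOL-Analysis.Finite_Cartesian_Product"
begin

record 'a matroid =
  ground :: "'a set"
  indep  :: "'a set \<Rightarrow> bool"

definition matroid :: "'a matroid \<Rightarrow> bool" where
  "matroid M \<longleftrightarrow>
     finite (ground M) \<and>
     indep M {} \<and>
     (\<forall>I. indep M I \<longrightarrow> I \<subseteq> ground M) \<and>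
     (\<forall>I J. indep M J \<and> I \<subseteq> J \<longrightarrow> indep M I) \<and>
     (\<forall>I J. indep M I \<and> indep M J \<and> card I < card J \<longrightarrow>
        (\<exists>x \<in> J - I. indep M (insert x I)))"

definition mrank :: "'a matroid \<Rightarrow> 'a set \<Rightarrow> nat" where
  "mrank M X = Max (card ` {I. I \<subseteq> X \<and> indep M I})"

definition matroid_rank :: "'a matroid \<Rightarrow> nat" where
  "matroid_rank M = mrank M (ground M)"

definition round_matroid :: "'a matroid \<Rightarrow> bool" where
  "round_matroid M \<longleftrightarrow>
     \<not> (\<exists>X Y. X \<union> Y = ground M \<and> X \<inter> Y = {} \<and>
              mrank M X < matroid_rank M \<and> mrank M Y < matroid_rank M)"

definition restrict :: "'a matroid \<Rightarrow> 'a set \<Rightarrow> 'a matroid" where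
  "restrict M X = \<lparr>ground = X, indep = (\<lambda>I. indep M I \<and> I \<subseteq> X)\<rparr>"

definition delete :: "'a matroid \<Rightarrow> 'a set \<Rightarrow> 'a matroid" where
  "delete M D = restrict M (ground M - D)"

definition contract :: "'a matroid \<Rightarrow> 'a set \<Rightarrow> 'a matroid" where
  "contract M C = \<lparr>ground = ground M - C,
     indep = (\<lambda>I. I \<subseteq> ground M - C \<and> mrank M (I \<union> C) = card I + mrank M C)\<rparr>"

definition matroid_iso :: "'a matroid \<Rightarrow> 'b matroid \<Rightarrow> bool" where
  "matroid_iso M N \<longleftrightarrow>
     (\<exists>f. bij_betw f (ground M) (ground N) \<and>
          (\<forall>I. I \<subseteq> ground M \<longrightarrow> (indep M I \<longleftrightarrow> indep N (f ` I))))"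

definition has_restriction :: "'a matroid \<Rightarrow> 'b matroid \<Rightarrow> bool" where
  "has_restriction M N \<longleftrightarrow> (\<exists>X. X \<subseteq> ground M \<and> matroid_iso (restrict M X) N)"

definition has_minor :: "'a matroid \<Rightarrow> 'b matroid \<Rightarrow> bool" where
  "has_minor M N \<longleftrightarrow>
     (\<exists>C D. C \<subseteq> ground M \<and> D \<subseteq> ground M \<and> C \<inter> D = {} \<and>
            matroid_iso (contract (delete M D) C) N)"

definition uniform :: "nat \<Rightarrow> nat \<Rightarrow> nat matroid" where
  "uniform k m = \<lparr>ground = {0..<m}, indep = (\<lambda>I. I \<subseteq> {0..<m} \<and> card I \<le> k)\<rparr>"

text \<open>Points: the 1-dimensional subspaces of F^3. A set S of points is independent iff
  the points are linearly independent, i.e. whenever vectors w_L \<in> L (L \<in> S) sum to 0,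
  all w_L are 0.\<close>
definition PG2_points :: "('f::field ^ 3) set set" where
  "PG2_points = {{c *s v | c. True} | v. v \<noteq> 0}"

definition PG2 :: "('f::field ^ 3) set matroid" where
  "PG2 = \<lparr>ground = PG2_points,
          indep = (\<lambda>S. S \<subseteq> PG2_points \<and> finite S \<and>
             (\<forall>w. (\<forall>L\<in>S. w L \<in> L) \<and> (\<Sum>L\<in>S. w L) = 0 \<longrightarrow> (\<forall>L\<in>S. w L = 0)))\<rparr>"

end

theory Submission
  imports Defs "HOL-Analysis.Cartesian_Space"
begin

text \<open>Take a largest set C that is skew both to the plane P and to the (q+2)-point line L.
  Every element then lies in the closure of P \<union> C or of L \<union> C, and since
  r(L \<union> C) < r(P \<union> C), roundness forces P \<union> C to span M. In M/C the set P is still a projective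
  plane and L a line; as the lines of P have only q+1 points, some e \<in> L is parallel to no point
  of P. Contracting e as well, two points of P become parallel only if e is on their line; two
  such lines meet in a point of P, which together with e spans both of them, so all these lines
  coincide with one line ab. Hence a together with the q^2 points off ab form a
  U(2,q^2+1)-restriction of M/(C \<union> {e}).\<close>

section \<open>Points of PG(2,F) as lines through the origin\<close>

definition proj_point :: "'f::field ^ 3 \<Rightarrow> ('f ^ 3) set" where
  "proj_point v = {c *s v | c. True}"

lemma proj_point_eq_span: "proj_point v = vec.span {v}"
  by (auto simp: proj_point_def vec.span_singleton)

lemma mem_proj_point: "x \<in> proj_point v \<longleftrightarrow> (\<exists>c. x = c *s v)"
  by (auto simp: proj_point_def)

lemma proj_point_self: "v \<in> proj_point v"
  by (simp add: proj_point_eq_span vec.span_base)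

lemma proj_point_eqI:
  assumes "w \<in> proj_point v" "w \<noteq> 0"
  shows "proj_point w = proj_point v"
proof -
  obtain c where c: "w = c *s v" using assms(1) mem_proj_point by blast
  with assms(2) have "c \<noteq> 0" by auto
  with c have "v = inverse c *s w" by (simp add: vector_smult_assoc)
  then have "v \<in> vec.span {w}" by (simp add: vec.span_scale vec.span_base)
  moreover have "w \<in> vec.span {v}" using assms(1) by (simp add: proj_point_eq_span)
  ultimately have "vec.span {w} \<subseteq> vec.span {v}" "vec.span {v} \<subseteq> vec.span {w}"
    by (simp_all add: vec.span_minimal)
  then show ?thesis unfolding proj_point_eq_span by blast
qed

lemma proj_point_in_PG2_points: "v \<noteq> 0 \<Longrightarrow> proj_point v \<in> PG2_points"
  by (auto simp: PG2_points_def proj_point_def)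

definition proj_rep :: "('f::field ^ 3) set \<Rightarrow> 'f ^ 3" where
  "proj_rep L = (SOME v. v \<noteq> 0 \<and> L = proj_point v)"

lemma
  assumes "L \<in> PG2_points"
  shows proj_rep_nonzero: "proj_rep L \<noteq> 0" and proj_point_proj_rep: "proj_point (proj_rep L) = L"
proof -
  have "\<exists>v. v \<noteq> 0 \<and> L = proj_point v" using assms by (auto simp: PG2_points_def proj_point_def)
  then have "proj_rep L \<noteq> 0 \<and> L = proj_point (proj_rep L)" unfolding proj_rep_def by (rule someI_ex)
  then show "proj_rep L \<noteq> 0" "proj_point (proj_rep L) = L" by auto
qed

lemma inj_on_proj_rep: "J \<subseteq> PG2_points \<Longrightarrow> inj_on proj_rep J"
  by (metis inj_onI proj_point_proj_rep subsetD)

lemma proj_rep_eq_iff: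
  "A \<in> PG2_points \<Longrightarrow> B \<in> PG2_points \<Longrightarrow> proj_rep A = proj_rep B \<longleftrightarrow> A = B"
  by (metis proj_point_proj_rep)

lemma point_eq_if_proj_rep_mem:
  "A \<in> PG2_points \<Longrightarrow> B \<in> PG2_points \<Longrightarrow> proj_rep B \<in> A \<Longrightarrow> B = A"
  by (metis proj_point_eqI proj_rep_nonzero proj_point_proj_rep)

lemma indep_PG2_iff_independent:
  assumes J: "J \<subseteq> PG2_points" "finite J"
  shows "indep PG2 J \<longleftrightarrow> vec.independent (proj_rep ` J)"
proof
  assume H: "indep PG2 J"
  show "vec.independent (proj_rep ` J)"
    unfolding vec.independent_explicit
  proof (intro conjI allI impI ballI)
    show "finite (proj_rep ` J)" using J by simp
    fix c v assume s: "(\<Sum>v\<in>proj_rep ` J. c v *s v) = 0" and v: "v \<in> proj_rep ` J"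
    define w where "w L = c (proj_rep L) *s proj_rep L" for L
    have "\<forall>L\<in>J. w L \<in> L" using J unfolding w_def
      by (metis mem_proj_point proj_point_proj_rep subsetD)
    moreover have "(\<Sum>L\<in>J. w L) = 0"
      using s unfolding w_def sum.reindex[OF inj_on_proj_rep[OF J(1)]] by (simp add: o_def)
    ultimately have "\<forall>L\<in>J. w L = 0" using H by (simp add: PG2_def)
    then show "c v = 0" using v J unfolding w_def by (auto dest: proj_rep_nonzero)
  qed
next
  assume I: "vec.independent (proj_rep ` J)"
  have "\<forall>L\<in>J. w L = 0" if w: "\<forall>L\<in>J. w L \<in> L" and s: "(\<Sum>L\<in>J. w L) = 0" for w
  proof -
    have "\<exists>c. w L = c *s proj_rep L" if "L \<in> J" for L
      using w that J by (metis mem_proj_point proj_point_proj_rep subsetD)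
    then obtain coef where coef: "\<And>L. L \<in> J \<Longrightarrow> w L = coef L *s proj_rep L" by metis
    define c where "c v = coef (the_inv_into J proj_rep v)" for v
    have c: "c (proj_rep L) = coef L" if "L \<in> J" for L
      using that by (simp add: c_def the_inv_into_f_f[OF inj_on_proj_rep[OF J(1)]])
    have "(\<Sum>v\<in>proj_rep ` J. c v *s v) = (\<Sum>L\<in>J. w L)"
      by (simp add: sum.reindex[OF inj_on_proj_rep[OF J(1)]] c coef)
    with I s have "\<forall>v\<in>proj_rep ` J. c v = 0" unfolding vec.independent_explicit by simp
    then show ?thesis by (auto simp: c coef)
  qed
  then show "indep PG2 J" using J by (auto simp: PG2_def)
qed

lemma proj_rep_notin_span_single:
  assumes "A \<in> PG2_points" "B \<in> PG2_points" "A \<noteq> B"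
  shows "proj_rep B \<notin> vec.span {proj_rep A}"
  using assms point_eq_if_proj_rep_mem by (metis proj_point_eq_span proj_point_proj_rep)

lemma independent_proj_rep_pair:
  assumes "A \<in> PG2_points" "B \<in> PG2_points" "A \<noteq> B"
  shows "vec.independent {proj_rep A, proj_rep B}"
  using assms proj_rep_notin_span_single[of B A] vec.span_base[of "proj_rep B" "{proj_rep B}"]
  by (auto simp: vec.independent_insert vec.dependent_single proj_rep_nonzero)

lemma indep_PG2_pair: "A \<in> PG2_points \<Longrightarrow> B \<in> PG2_points \<Longrightarrow> A \<noteq> B \<Longrightarrow> indep PG2 {A, B}"
  by (subst indep_PG2_iff_independent) (auto simp: independent_proj_rep_pair)

lemma indep_PG2_triple_iff:
  assumes "A \<in> PG2_points" "B \<in> PG2_points" "X \<in> PG2_points" "card {A, B, X} = 3"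
  shows "indep PG2 {A, B, X} \<longleftrightarrow> proj_rep X \<notin> vec.span {proj_rep A, proj_rep B}"
proof -
  have d: "A \<noteq> B" "A \<noteq> X" "B \<noteq> X" using assms(4)
    by (auto simp: card_insert_if split: if_splits)
  have "proj_rep X \<noteq> proj_rep A" "proj_rep X \<noteq> proj_rep B"
    using d assms by (metis proj_point_proj_rep)+
  then have "proj_rep ` {A, B, X} = insert (proj_rep X) {proj_rep A, proj_rep B}" by auto
  then have "indep PG2 {A, B, X} \<longleftrightarrow> vec.independent (insert (proj_rep X) {proj_rep A, proj_rep B})"
    using assms by (subst indep_PG2_iff_independent) auto
  also have "\<dots> \<longleftrightarrow> proj_rep X \<notin> vec.span {proj_rep A, proj_rep B}"
    using \<open>proj_rep X \<noteq> proj_rep A\<close> \<open>proj_rep X \<noteq> proj_rep B\<close>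
      independent_proj_rep_pair[OF assms(1,2) d(1)]
    by (subst vec.independent_insert) simp
  finally show ?thesis .
qed

lemma card_le_3_if_indep_PG2:
  assumes "indep PG2 (J :: ('f::field ^ 3) set set)"
  shows "card J \<le> 3"
proof -
  have J: "J \<subseteq> PG2_points" "finite J" using assms by (auto simp: PG2_def)
  then have "vec.independent (proj_rep ` J)" using assms indep_PG2_iff_independent by blast
  then have "card (proj_rep ` J) \<le> 3"
    using vec.independent_bound_general dim_subset_UNIV_cart_gen[of "proj_rep ` J"] by fastforce
  then show ?thesis using card_image[OF inj_on_proj_rep[OF J(1)]] by simp
qed

lemma exists_notin_span:
  assumes "finite (S :: ('f::field ^ 3) set)" "card S \<le> 2"
  obtains z where "z \<notin> vec.span S"
proof -
  have "\<not> UNIV \<subseteq> vec.span S"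
  proof
    assume "UNIV \<subseteq> vec.span S"
    then have "vec.dim (UNIV :: ('f ^ 3) set) \<le> card S" using vec.dim_le_card assms(1) by blast
    then show False using vec_dim_card[where 'a='f and 'n=3] assms(2) by simp
  qed
  then show ?thesis using that by blast
qed

lemma in_span_iff_span_singleton_subset: "y \<in> vec.span S \<longleftrightarrow> vec.span {y} \<subseteq> vec.span S"
  using vec.span_base[of y "{y}"] vec.span_minimal[of "{y}" "vec.span S"] by auto

lemma proj_rep_proj_point_in_span_iff:
  assumes "x \<noteq> 0"
  shows "proj_rep (proj_point x) \<in> vec.span S \<longleftrightarrow> x \<in> vec.span S"
proof -
  have "vec.span {proj_rep (proj_point x)} = vec.span {x}"
    using assms by (metis proj_point_eq_span proj_point_in_PG2_points proj_point_proj_rep)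
  then show ?thesis by (simp add: in_span_iff_span_singleton_subset)
qed

lemma affine_chart_inj:
  fixes a b z :: "'f::field ^ 3"
  assumes ab: "vec.independent {a, b}" "a \<noteq> b" and z: "z \<notin> vec.span {a, b}"
    and eq: "proj_point (z + s *s a + t *s b) = proj_point (z + s' *s a + t' *s b)"
  shows "s = s' \<and> t = t'"
proof -
  have "z + s' *s a + t' *s b \<in> proj_point (z + s *s a + t *s b)"
    using eq proj_point_self by metis
  then obtain k where "z + s' *s a + t' *s b = k *s (z + s *s a + t *s b)"
    by (auto simp: mem_proj_point)
  then have lin: "(1 - k) *s z = (k * s - s') *s a + (k * t - t') *s b"
    by (simp add: vec_eq_iff algebra_simps)
  have "k = 1"
  proof (rule ccontr)
    assume "k \<noteq> 1"
    have "(k * s - s') *s a + (k * t - t') *s b \<in> vec.span {a, b}"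
      by (intro vec.span_add vec.span_scale vec.span_base) auto
    then have "inverse (1 - k) *s ((1 - k) *s z) \<in> vec.span {a, b}"
      unfolding lin by (rule vec.span_scale)
    then show False using z \<open>k \<noteq> 1\<close> by (simp add: vector_smult_assoc)
  qed
  with lin have "(s - s') *s a + (t - t') *s b = 0"
    by (simp add: vec_eq_iff algebra_simps)
  then have "(\<Sum>v\<in>{a, b}. (if v = a then s - s' else t - t') *s v) = 0"
    using ab(2) by simp
  then have "\<forall>v\<in>{a, b}. (if v = a then s - s' else t - t') = 0"
    using ab(1) unfolding vec.independent_explicit
    by (blast dest: spec[of _ "\<lambda>v. if v = a then s - s' else t - t'"])
  then show ?thesis using ab(2) by auto
qed

lemma PG2_card_noncollinear:
  fixes A B :: "('f::{field,finite} ^ 3) set"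
  assumes A: "A \<in> PG2_points" and B: "B \<in> PG2_points" and AB: "A \<noteq> B"
  shows "CARD('f) ^ 2 \<le> card {X \<in> PG2_points. card {A, B, X} = 3 \<and> indep PG2 {A, B, X}}"
proof -
  define a where "a = proj_rep A"
  define b where "b = proj_rep B"
  have ab: "vec.independent {a, b}" "a \<noteq> b"
    using independent_proj_rep_pair[OF A B AB] proj_rep_eq_iff[OF A B] AB by (simp_all add: a_def b_def)
  have "card {a, b} \<le> 2" by (simp add: card_insert_if)
  then obtain z where z: "z \<notin> vec.span {a, b}" using exists_notin_span[of "{a, b}"] by blast
  define \<phi> where "\<phi> p = proj_point (z + fst p *s a + snd p *s b)" for p :: "'f \<times> 'f"
  have off: "z + s *s a + t *s b \<notin> vec.span {a, b}" for s t
  proof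
    assume "z + s *s a + t *s b \<in> vec.span {a, b}"
    moreover have "s *s a + t *s b \<in> vec.span {a, b}"
      by (intro vec.span_add vec.span_scale vec.span_base) auto
    ultimately have "z + s *s a + t *s b - (s *s a + t *s b) \<in> vec.span {a, b}"
      by (rule vec.span_diff)
    then show False using z by simp
  qed
  have "\<phi> p \<in> {X \<in> PG2_points. card {A, B, X} = 3 \<and> indep PG2 {A, B, X}}" for p
  proof -
    have nz: "z + fst p *s a + snd p *s b \<noteq> 0" using off vec.span_zero by metis
    then have P: "\<phi> p \<in> PG2_points" by (simp add: \<phi>_def proj_point_in_PG2_points)
    have out: "proj_rep (\<phi> p) \<notin> vec.span {a, b}"
      using off nz by (simp add: \<phi>_def proj_rep_proj_point_in_span_iff)
    then have "\<phi> p \<noteq> A" "\<phi> p \<noteq> B"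
      using vec.span_base[of a "{a, b}"] vec.span_base[of b "{a, b}"] unfolding a_def b_def by auto
    then have c3: "card {A, B, \<phi> p} = 3" using AB by auto
    show ?thesis using P c3 indep_PG2_triple_iff[OF A B P c3] out unfolding a_def b_def by simp
  qed
  moreover have "inj \<phi>"
    by (rule injI) (use affine_chart_inj[OF ab z] in \<open>auto simp: \<phi>_def prod_eq_iff\<close>)
  ultimately have "card (range \<phi>) \<le> card {X \<in> PG2_points. card {A, B, X} = 3 \<and> indep PG2 {A, B, X}}"
    by (intro card_mono) auto
  moreover have "card (range \<phi>) = CARD('f) ^ 2"
    using card_image[OF \<open>inj \<phi>\<close>] by (simp add: power2_eq_square UNIV_Times_UNIV[symmetric] card_cartesian_product del: UNIV_Times_UNIV)
  ultimately show ?thesis by simp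
qed

lemma PG2_exists_indep_triple:
  obtains J :: "('f::{field,finite} ^ 3) set set" where "J \<subseteq> PG2_points" "card J = 3" "indep PG2 J"
proof -
  obtain z1 :: "'f ^ 3" where z1: "z1 \<notin> vec.span {}" using exists_notin_span[of "{}"] by auto
  then have "z1 \<noteq> 0" using vec.span_zero by auto
  define A where "A = proj_point z1"
  have A: "A \<in> PG2_points" using proj_point_in_PG2_points[OF \<open>z1 \<noteq> 0\<close>] by (simp add: A_def)
  obtain z2 :: "'f ^ 3" where z2: "z2 \<notin> vec.span {proj_rep A}"
    using exists_notin_span[of "{proj_rep A}"] by auto
  then have "z2 \<noteq> 0" using vec.span_zero by auto
  define B where "B = proj_point z2"
  have B: "B \<in> PG2_points" using proj_point_in_PG2_points[OF \<open>z2 \<noteq> 0\<close>] by (simp add: B_def)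
  have "A \<noteq> B"
    using z2 proj_point_self[of z2] proj_point_proj_rep[OF A] by (auto simp: B_def proj_point_eq_span)
  have "0 < CARD('f) ^ 2" by simp
  then have "0 < card {X \<in> PG2_points. card {A, B, X} = 3 \<and> indep PG2 {A, B, X}}"
    using PG2_card_noncollinear[OF A B \<open>A \<noteq> B\<close>] by linarith
  then have "{X \<in> PG2_points. card {A, B, X} = 3 \<and> indep PG2 {A, B, X}} \<noteq> {}"
    by (metis card.empty less_irrefl)
  then obtain X where "X \<in> PG2_points" "card {A, B, X} = 3" "indep PG2 {A, B, X}"
    by blast
  then show ?thesis using A B that[of "{A, B, X}"] by auto
qed

lemma point_on_line_eq_affine:
  assumes A: "A \<in> PG2_points" and X: "X \<in> PG2_points" "X \<noteq> A"
    and span: "proj_rep X \<in> vec.span {b, proj_rep A}"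
  obtains k where "X = proj_point (k *s proj_rep A + b)"
proof -
  define a where "a = proj_rep A"
  obtain t where "proj_rep X - t *s b \<in> vec.span {a}"
    using span vec.span_breakdown_eq[of "proj_rep X" b "{a}"] by (auto simp: a_def)
  then obtain s where "proj_rep X - t *s b = s *s a" using vec.span_singleton by blast
  then have rX: "proj_rep X = s *s a + t *s b" by (simp add: diff_eq_eq)
  have "t \<noteq> 0"
  proof
    assume "t = 0"
    then have "proj_rep X \<in> proj_point a" using rX by (simp add: mem_proj_point)
    then show False
      using point_eq_if_proj_rep_mem[OF A X(1)] proj_point_proj_rep[OF A] X(2) by (simp add: a_def)
  qed
  with rX have "proj_rep X = t *s ((s / t) *s a + b)"
    by (simp add: vec.scale_right_distrib vector_smult_assoc)
  then have "proj_rep X \<in> proj_point ((s / t) *s a + b)" unfolding mem_proj_point by blast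
  then have "X = proj_point ((s / t) *s a + b)"
    using proj_point_eqI proj_rep_nonzero[OF X(1)] proj_point_proj_rep[OF X(1)] by metis
  then show ?thesis using that by (simp add: a_def)
qed

lemma PG2_card_collinear:
  assumes S: "S \<subseteq> (PG2_points :: ('f::{field,finite} ^ 3) set set)"
    and dep: "\<And>T. T \<subseteq> S \<Longrightarrow> card T = 3 \<Longrightarrow> \<not> indep PG2 T"
  shows "card S \<le> CARD('f) + 1"
proof (cases "\<exists>A B. A \<in> S \<and> B \<in> S \<and> A \<noteq> B")
  case False
  then have "card S \<le> 1" using card_le_Suc0_iff_eq[of S] by auto
  then show ?thesis by simp
next
  case True
  then obtain A B where AB: "A \<in> S" "B \<in> S" "A \<noteq> B" by blast
  have A: "A \<in> PG2_points" and B: "B \<in> PG2_points" using AB S by auto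
  have "\<exists>k. X = proj_point (k *s proj_rep A + proj_rep B)" if X: "X \<in> S - {A}" for X
  proof -
    have XP: "X \<in> PG2_points" using X S by auto
    have "proj_rep X \<in> vec.span {proj_rep B, proj_rep A}"
    proof (cases "X = B")
      case True
      then show ?thesis by (simp add: vec.span_base)
    next
      case False
      have "X \<noteq> A" using X by simp
      with False AB have c3: "card {A, B, X} = 3" by (simp add: card_insert_if)
      then have "\<not> indep PG2 {A, B, X}" using dep AB X by auto
      then show ?thesis using indep_PG2_triple_iff[OF A B XP c3] by (simp add: insert_commute)
    qed
    with A XP X show ?thesis using point_on_line_eq_affine by (metis DiffE singletonI)
  qed
  then obtain \<kappa> where \<kappa>: "\<And>X. X \<in> S - {A} \<Longrightarrow> X = proj_point (\<kappa> X *s proj_rep A + proj_rep B)"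
    by metis
  have "inj_on \<kappa> (S - {A})" by (rule inj_onI) (metis \<kappa>)
  then have "card (S - {A}) \<le> CARD('f)" by (rule card_inj_on_le) auto
  then show ?thesis using AB by (simp add: card_Diff_singleton)
qed

lemma spans_of_pairs_meet:
  fixes a b c d :: "'f::field ^ 3"
  assumes "vec.independent {a, b}" "a \<noteq> b" "vec.independent {c, d}" "c \<noteq> d"
  obtains x where "x \<noteq> 0" "x \<in> vec.span {a, b}" "x \<in> vec.span {c, d}"
proof -
  have "vec.dim (vec.span {a, b}) = 2" "vec.dim (vec.span {c, d}) = 2"
    using assms by (simp_all add: vec.dim_eq_card_independent)
  moreover have "vec.dim {x + y |x y. x \<in> vec.span {a, b} \<and> y \<in> vec.span {c, d}} \<le> 3"
    using dim_subset_UNIV_cart_gen[of "{x + y |x y. x \<in> vec.span {a, b} \<and> y \<in> vec.span {c, d}}"]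
    by simp
  ultimately have "vec.dim (vec.span {a, b} \<inter> vec.span {c, d}) \<noteq> 0"
    using vec.dim_sums_Int[OF vec.subspace_span vec.subspace_span, of "{a, b}" "{c, d}"] by linarith
  then show ?thesis using that by auto
qed

lemma PG2_lines_meet:
  fixes A B C D :: "('f::field ^ 3) set"
  assumes A: "A \<in> PG2_points" and B: "B \<in> PG2_points" and C: "C \<in> PG2_points"
    and D: "D \<in> PG2_points" and "A \<noteq> B" "C \<noteq> D"
  obtains X where "X \<in> PG2_points" "\<not> (card {A, B, X} = 3 \<and> indep PG2 {A, B, X})"
    "\<not> (card {C, D, X} = 3 \<and> indep PG2 {C, D, X})"
proof -
  obtain x where x: "x \<noteq> 0" "x \<in> vec.span {proj_rep A, proj_rep B}" "x \<in> vec.span {proj_rep C, proj_rep D}"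
    by (rule spans_of_pairs_meet[OF independent_proj_rep_pair[OF A B] _ independent_proj_rep_pair[OF C D]])
      (use assms proj_rep_eq_iff in auto)
  define X where "X = proj_point x"
  have X: "X \<in> PG2_points" using proj_point_in_PG2_points[OF x(1)] by (simp add: X_def)
  have "proj_rep X \<in> vec.span {proj_rep A, proj_rep B}" "proj_rep X \<in> vec.span {proj_rep C, proj_rep D}"
    using x by (simp_all add: X_def proj_rep_proj_point_in_span_iff)
  then show ?thesis using that[OF X] indep_PG2_triple_iff[OF A B X] indep_PG2_triple_iff[OF C D X] by blast
qed

section \<open>Rank, closure and skewness\<close>

lemma card_triple_le: "card {a, b, c} \<le> 3"
  by (simp add: card_insert_if)

locale wf_matroid =
  fixes M :: "'a matroid"
  assumes matroid: "matroid M"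
begin

lemma finite_ground: "finite (ground M)"
  using matroid by (simp add: matroid_def)

lemma indep_empty: "indep M {}"
  using matroid by (simp add: matroid_def)

lemma indep_subset_ground: "indep M I \<Longrightarrow> I \<subseteq> ground M"
  using matroid by (simp add: matroid_def)

lemma indep_finite: "indep M I \<Longrightarrow> finite I"
  using indep_subset_ground finite_ground finite_subset by blast

lemma indep_subset: "indep M J \<Longrightarrow> I \<subseteq> J \<Longrightarrow> indep M I"
  using matroid unfolding matroid_def by blast

lemma indep_augment:
  "indep M I \<Longrightarrow> indep M J \<Longrightarrow> card I < card J \<Longrightarrow> \<exists>x\<in>J - I. indep M (insert x I)"
  using matroid unfolding matroid_def by blast

lemma finite_indep_subsets: "finite {I. I \<subseteq> X \<and> indep M I}"
  by (rule finite_subset[of _ "Pow (ground M)"]) (auto dest: indep_subset_ground simp: finite_ground)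

lemma card_le_rank: "I \<subseteq> X \<Longrightarrow> indep M I \<Longrightarrow> card I \<le> mrank M X"
  unfolding mrank_def by (rule Max_ge) (use finite_indep_subsets in auto)

lemma obtain_rank_witness:
  obtains I where "I \<subseteq> X" "indep M I" "card I = mrank M X"
proof -
  have "mrank M X \<in> card ` {I. I \<subseteq> X \<and> indep M I}"
    unfolding mrank_def by (rule Max_in) (use finite_indep_subsets indep_empty in auto)
  then show ?thesis using that by auto
qed

lemma rank_le_card: "finite X \<Longrightarrow> mrank M X \<le> card X"
  by (metis obtain_rank_witness card_mono)

lemma rank_indep: "indep M I \<Longrightarrow> mrank M I = card I"
  using card_le_rank[of I I] rank_le_card[of I] indep_finite[of I] by simp

lemma rank_mono: "X \<subseteq> Y \<Longrightarrow> mrank M X \<le> mrank M Y"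
  by (metis obtain_rank_witness card_le_rank order_trans)

lemma rank_empty: "mrank M {} = 0"
  using rank_le_card[of "{}"] by simp

lemma indep_if_rank_eq_card: "finite X \<Longrightarrow> mrank M X = card X \<Longrightarrow> indep M X"
  by (metis obtain_rank_witness card_subset_eq)

lemma indep_extend_to_rank:
  assumes "I \<subseteq> X" "indep M I"
  obtains B where "I \<subseteq> B" "B \<subseteq> X" "indep M B" "card B = mrank M X"
proof -
  define F where "F = {B. I \<subseteq> B \<and> B \<subseteq> X \<and> indep M B}"
  have "finite F" unfolding F_def by (rule finite_subset[OF _ finite_indep_subsets[of X]]) auto
  moreover have "I \<in> F" using assms by (simp add: F_def)
  ultimately obtain B where B: "B \<in> F" and Bmax: "\<And>B'. B' \<in> F \<Longrightarrow> card B' \<le> card B"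
    using Max_in[of "card ` F"] Max_ge[of "card ` F"] by (metis empty_iff finite_imageI image_iff image_eqI)
  have "\<not> card B < mrank M X"
  proof
    assume "card B < mrank M X"
    moreover obtain J where "J \<subseteq> X" "indep M J" "card J = mrank M X" by (rule obtain_rank_witness)
    ultimately obtain x where x: "x \<in> J - B" "indep M (insert x B)"
      using indep_augment[of B J] B by (auto simp: F_def)
    with B \<open>J \<subseteq> X\<close> have "insert x B \<in> F" by (auto simp: F_def)
    with Bmax have "card (insert x B) \<le> card B" by blast
    with x B indep_finite show False by (auto simp: F_def)
  qed
  moreover have "card B \<le> mrank M X" using B card_le_rank by (auto simp: F_def)
  ultimately show ?thesis using that B by (auto simp: F_def)
qed

lemma rank_submodular: "mrank M (X \<union> Y) + mrank M (X \<inter> Y) \<le> mrank M X + mrank M Y"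
proof -
  obtain I where I: "I \<subseteq> X \<inter> Y" "indep M I" "card I = mrank M (X \<inter> Y)"
    by (rule obtain_rank_witness)
  then obtain B where B: "I \<subseteq> B" "B \<subseteq> X \<union> Y" "indep M B" "card B = mrank M (X \<union> Y)"
    by (metis indep_extend_to_rank le_supI1 inf.boundedE)
  have "finite B" using B indep_finite by auto
  have "card (B \<inter> X) + card (B \<inter> Y) = card B + card (B \<inter> X \<inter> Y)"
    using card_Un_Int[of "B \<inter> X" "B \<inter> Y"] \<open>finite B\<close> B(2)
    by (simp add: Int_Un_distrib[symmetric] Int_absorb2 Int_assoc Int_left_commute)
  moreover have "card I \<le> card (B \<inter> X \<inter> Y)"
    using I B \<open>finite B\<close> by (intro card_mono) auto
  moreover have "card (B \<inter> X) \<le> mrank M X" "card (B \<inter> Y) \<le> mrank M Y"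
    using card_le_rank indep_subset B by auto
  ultimately show ?thesis using I B by linarith
qed

lemma rank_union_le: "mrank M (X \<union> Y) \<le> mrank M X + mrank M Y"
  using rank_submodular[of X Y] by linarith

lemma rank_insert_le: "mrank M (insert x X) \<le> mrank M X + 1"
  using rank_union_le[of "{x}" X] rank_le_card[of "{x}"] by simp

lemma rank_union_le_if_common:
  assumes "mrank M A \<le> k" "mrank M B \<le> k" "Z \<subseteq> A \<inter> B" "k \<le> mrank M Z"
  shows "mrank M (A \<union> B) \<le> k"
  using rank_submodular[of A B] rank_mono[OF assms(3)] assms by linarith

lemma rank_union_eq_if_insert_eq:
  assumes "finite S" "\<And>x. x \<in> S \<Longrightarrow> mrank M (insert x A) = mrank M A"
  shows "mrank M (A \<union> S) = mrank M A"
  using assms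
proof (induction S rule: finite_induct)
  case empty
  then show ?case by simp
next
  case (insert x S)
  then have "mrank M (A \<union> S) = mrank M A" "mrank M (insert x A) = mrank M A" by auto
  moreover have "mrank M A \<le> mrank M ((A \<union> S) \<inter> insert x A)" "mrank M A \<le> mrank M (A \<union> insert x S)"
    by (auto intro: rank_mono)
  moreover have "mrank M (A \<union> insert x S) + mrank M ((A \<union> S) \<inter> insert x A)
      \<le> mrank M (A \<union> S) + mrank M (insert x A)"
    using rank_submodular[of "A \<union> S" "insert x A"] by (simp add: Un_absorb2)
  ultimately show ?case by linarith
qed

lemma rank_triple_le: "mrank M {a, b, c} \<le> 3"
  using rank_le_card[of "{a, b, c}"] card_triple_le[of a b c] by simp

lemma rank_triple_eq_3_iff: "mrank M {a, b, c} = 3 \<longleftrightarrow> card {a, b, c} = 3 \<and> indep M {a, b, c}"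
proof
  assume r: "mrank M {a, b, c} = 3"
  then have "card {a, b, c} = 3" using rank_le_card[of "{a, b, c}"] card_triple_le[of a b c] by simp
  with r show "card {a, b, c} = 3 \<and> indep M {a, b, c}" using indep_if_rank_eq_card[of "{a, b, c}"] by simp
qed (simp add: rank_indep)

lemma rank_insert_eq_mono:
  assumes "mrank M (insert p X) = mrank M X" "X \<subseteq> A"
  shows "mrank M (insert p A) = mrank M A"
proof -
  have "A \<union> insert p X = insert p A" using assms(2) by auto
  then have "mrank M (insert p A) + mrank M (A \<inter> insert p X) \<le> mrank M A + mrank M (insert p X)"
    using rank_submodular[of A "insert p X"] by (simp only:)
  moreover have "mrank M X \<le> mrank M (A \<inter> insert p X)" using assms(2) by (intro rank_mono) auto
  moreover have "mrank M A \<le> mrank M (insert p A)" by (rule rank_mono) auto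
  ultimately show ?thesis using assms(1) by linarith
qed

lemma rank_contract_uniform_2:
  assumes points: "\<And>p. p \<in> R \<Longrightarrow> mrank M ({p} \<union> D) = 1 + mrank M D"
    and pairs: "\<And>c d. \<lbrakk>c \<in> R; d \<in> R; c \<noteq> d\<rbrakk> \<Longrightarrow> mrank M ({c, d} \<union> D) = 2 + mrank M D"
    and bound: "\<And>I. I \<subseteq> R \<Longrightarrow> mrank M (I \<union> D) \<le> 2 + mrank M D"
    and "finite R" "I \<subseteq> R"
  shows "mrank M (I \<union> D) = card I + mrank M D \<longleftrightarrow> card I \<le> 2"
proof -
  have "finite I" using assms(4,5) finite_subset by blast
  consider "card I = 0" | "card I = 1" | "card I = 2" | "3 \<le> card I" by linarith
  then show ?thesis
  proof cases
    case 1
    then show ?thesis using \<open>finite I\<close> by simp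
  next
    case 2
    then obtain p where "I = {p}" by (rule card_1_singletonE)
    then show ?thesis using points assms(5) by simp
  next
    case 3
    then obtain c d where "I = {c, d}" "c \<noteq> d" by (auto simp: card_2_iff)
    then show ?thesis using pairs assms(5) by simp
  next
    case 4
    then show ?thesis using bound[OF assms(5)] by simp
  qed
qed

end

definition mclosure :: "'a matroid \<Rightarrow> 'a set \<Rightarrow> 'a set" where
  "mclosure M X = {x \<in> ground M. mrank M (insert x X) = mrank M X}"

definition skew :: "'a matroid \<Rightarrow> 'a set \<Rightarrow> 'a set \<Rightarrow> bool" where
  "skew M X Y \<longleftrightarrow> mrank M (X \<union> Y) = mrank M X + mrank M Y"

context wf_matroid
begin

lemma rank_closure_le: "mrank M (mclosure M X) \<le> mrank M X"
proof -
  have "finite (mclosure M X)" using finite_ground by (simp add: mclosure_def)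
  moreover have "mrank M (insert x X) = mrank M X" if "x \<in> mclosure M X" for x
    using that by (simp add: mclosure_def)
  ultimately have "mrank M (X \<union> mclosure M X) = mrank M X"
    by (rule rank_union_eq_if_insert_eq)
  moreover have "mrank M (mclosure M X) \<le> mrank M (X \<union> mclosure M X)"
    by (rule rank_mono) blast
  ultimately show ?thesis by linarith
qed

lemma skew_subset:
  assumes "skew M Q C" "S \<subseteq> Q"
  shows "skew M S C"
proof -
  have "(S \<union> C) \<union> Q = Q \<union> C" using assms(2) by auto
  then have "mrank M (Q \<union> C) + mrank M ((S \<union> C) \<inter> Q) \<le> mrank M (S \<union> C) + mrank M Q"
    using rank_submodular[of "S \<union> C" Q] by (simp only:)
  moreover have "mrank M S \<le> mrank M ((S \<union> C) \<inter> Q)" using assms(2) by (intro rank_mono) auto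
  ultimately show ?thesis using assms(1) rank_union_le[of S C] by (simp add: skew_def)
qed

text \<open>A set C of maximum size works: an element outside both closures could be added to C.\<close>
lemma exists_skew_covering:
  obtains C where "C \<subseteq> ground M" "skew M X C" "skew M Y C"
    "ground M \<subseteq> mclosure M (X \<union> C) \<union> mclosure M (Y \<union> C)"
proof -
  define Fam where "Fam = {C. C \<subseteq> ground M \<and> skew M X C \<and> skew M Y C}"
  have "finite Fam" unfolding Fam_def by (rule finite_subset[of _ "Pow (ground M)"]) (auto simp: finite_ground)
  moreover have "{} \<in> Fam" by (simp add: Fam_def skew_def rank_empty)
  ultimately obtain C where C: "C \<in> Fam" and Cmax: "\<And>C'. C' \<in> Fam \<Longrightarrow> card C' \<le> card C"
    using Max_in[of "card ` Fam"] Max_ge[of "card ` Fam"] by (metis empty_iff finite_imageI image_iff image_eqI)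
  have "x \<in> mclosure M (X \<union> C) \<union> mclosure M (Y \<union> C)" if x: "x \<in> ground M" for x
  proof (rule ccontr)
    assume n: "x \<notin> mclosure M (X \<union> C) \<union> mclosure M (Y \<union> C)"
    then have "x \<notin> C" using x by (auto simp: mclosure_def insert_absorb)
    have step: "skew M Z (insert x C)" if "skew M Z C" "x \<notin> mclosure M (Z \<union> C)" for Z
    proof -
      have "mrank M (Z \<union> C) \<le> mrank M (insert x (Z \<union> C))" by (rule rank_mono) auto
      then have "mrank M (insert x (Z \<union> C)) = mrank M (Z \<union> C) + 1"
        using that(2) x rank_insert_le[of x "Z \<union> C"] by (auto simp: mclosure_def)
      then show ?thesis
        using that(1) rank_insert_le[of x C] rank_union_le[of Z "insert x C"] by (simp add: skew_def)
    qed
    have "insert x C \<in> Fam" using C x n step by (simp add: Fam_def)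
    with Cmax have "card (insert x C) \<le> card C" by blast
    moreover have "finite C" using C finite_ground finite_subset by (auto simp: Fam_def)
    ultimately show False using \<open>x \<notin> C\<close> by simp
  qed
  then show ?thesis using that C by (auto simp: Fam_def)
qed

lemma round_matroid_rank_cover:
  assumes "round_matroid M" "ground M \<subseteq> mclosure M A \<union> mclosure M B"
  shows "matroid_rank M \<le> mrank M A \<or> matroid_rank M \<le> mrank M B"
proof -
  define X where "X = mclosure M A"
  define Y where "Y = ground M - X"
  have "X \<union> Y = ground M" "X \<inter> Y = {}" by (auto simp: X_def Y_def mclosure_def)
  with assms(1) have "\<not> (mrank M X < matroid_rank M \<and> mrank M Y < matroid_rank M)"
    unfolding round_matroid_def by blast
  moreover have "mrank M X \<le> mrank M A" using rank_closure_le by (simp add: X_def)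
  moreover have "mrank M Y \<le> mrank M B"
    using assms(2) rank_mono[of Y "mclosure M B"] rank_closure_le[of B] by (force simp: X_def Y_def)
  ultimately show ?thesis by linarith
qed

end

lemma rank_restrict:
  assumes "Y \<subseteq> X"
  shows "mrank (restrict M X) Y = mrank M Y"
proof -
  have "{I. I \<subseteq> Y \<and> indep (restrict M X) I} = {I. I \<subseteq> Y \<and> indep M I}"
    using assms by (auto simp: restrict_def)
  then show ?thesis unfolding mrank_def by simp
qed

lemma (in wf_matroid) has_minor_uniformI:
  assumes "C \<subseteq> ground M" "R \<subseteq> ground M" "R \<inter> C = {}" "card R = n"
    and rank_R: "\<And>I. I \<subseteq> R \<Longrightarrow> mrank M (I \<union> C) = card I + mrank M C \<longleftrightarrow> card I \<le> k"
  shows "has_minor M (uniform k n)"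
proof -
  define D where "D = ground M - R - C"
  have "ground M - D = R \<union> C" using assms(1,2) by (auto simp: D_def)
  then have minor: "delete M D = restrict M (R \<union> C)"
    by (simp add: delete_def)
  have ground: "ground (contract (delete M D) C) = R"
    using assms(3) by (auto simp: minor contract_def restrict_def)
  have "finite R" using assms(2) finite_ground finite_subset by blast
  then obtain h where h: "bij_betw h R {0..<n}"
    using finite_same_card_bij[of R "{0..<n}"] assms(4) by auto
  have "indep (contract (delete M D) C) I \<longleftrightarrow> indep (uniform k n) (h ` I)" if I: "I \<subseteq> R" for I
  proof -
    have "indep (contract (delete M D) C) I \<longleftrightarrow>
        mrank (restrict M (R \<union> C)) (I \<union> C) = card I + mrank (restrict M (R \<union> C)) C"
      using I assms(3) by (auto simp: minor contract_def restrict_def[of M "R \<union> C"])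
    also have "\<dots> \<longleftrightarrow> mrank M (I \<union> C) = card I + mrank M C"
      using I by (subst (1 2) rank_restrict) auto
    also have "\<dots> \<longleftrightarrow> card (h ` I) \<le> k"
      using rank_R[OF I] card_image[OF inj_on_subset[OF bij_betw_imp_inj_on[OF h] I]] by simp
    finally show ?thesis using I h by (auto simp: uniform_def bij_betw_def)
  qed
  then have "matroid_iso (contract (delete M D) C) (uniform k n)"
    unfolding matroid_iso_def using h ground by (intro exI[of _ h]) (simp add: uniform_def)
  moreover have "C \<inter> D = {}" "D \<subseteq> ground M" by (auto simp: D_def)
  ultimately show ?thesis using assms(1) unfolding has_minor_def by blast
qed

lemma has_restriction_uniformE:
  assumes "has_restriction M (uniform k n)"
  obtains L where "L \<subseteq> ground M" "card L = n" "\<And>I. I \<subseteq> L \<Longrightarrow> indep M I \<longleftrightarrow> card I \<le> k"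
proof -
  obtain L f where L: "L \<subseteq> ground M" and f: "bij_betw f L {0..<n}"
    and fi: "\<forall>I. I \<subseteq> L \<longrightarrow> (indep M I \<and> I \<subseteq> L \<longleftrightarrow> f ` I \<subseteq> {0..<n} \<and> card (f ` I) \<le> k)"
    using assms unfolding has_restriction_def matroid_iso_def by (auto simp: restrict_def uniform_def)
  have "indep M I \<longleftrightarrow> card I \<le> k" if I: "I \<subseteq> L" for I
  proof -
    have "f ` I \<subseteq> {0..<n}" using f I by (auto simp: bij_betw_def)
    moreover have "card (f ` I) = card I"
      using card_image[OF inj_on_subset[OF bij_betw_imp_inj_on[OF f] I]] .
    ultimately show ?thesis using fi I by auto
  qed
  then show ?thesis using that L bij_betw_same_card[OF f] by simp
qed

section \<open>Projective planes inside a matroid\<close>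

text \<open>The properties of a restriction of M isomorphic to PG(2,q) that the argument uses,
  stated in terms of the rank function of M.\<close>
locale proj_plane_restriction = wf_matroid +
  fixes P :: "'a set" and q :: nat
  assumes plane_subset_ground: "P \<subseteq> ground M"
    and rank_plane: "mrank M P = 3"
    and rank_pair: "\<lbrakk>a \<in> P; b \<in> P; a \<noteq> b\<rbrakk> \<Longrightarrow> mrank M {a, b} = 2"
    and card_collinear: "\<lbrakk>S \<subseteq> P; mrank M S \<le> 2\<rbrakk> \<Longrightarrow> card S \<le> q + 1"
    and lines_meet: "\<lbrakk>a \<in> P; b \<in> P; c \<in> P; d \<in> P; a \<noteq> b; c \<noteq> d\<rbrakk> \<Longrightarrow>
      \<exists>x\<in>P. mrank M {a, b, x} \<le> 2 \<and> mrank M {c, d, x} \<le> 2"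
    and card_noncollinear: "\<lbrakk>a \<in> P; b \<in> P; a \<noteq> b\<rbrakk> \<Longrightarrow>
      q ^ 2 \<le> card {x \<in> P. mrank M {a, b, x} = 3}"

locale PG2_restriction = wf_matroid +
  fixes P :: "'a set" and g :: "'a \<Rightarrow> ('f::{field,finite} ^ 3) set"
  assumes PG2_subset_ground: "P \<subseteq> ground M"
    and bij_PG2: "bij_betw g P PG2_points"
    and indep_iff_PG2: "\<And>I. I \<subseteq> P \<Longrightarrow> indep M I \<longleftrightarrow> indep PG2 (g ` I)"
begin

lemma card_image_g: "I \<subseteq> P \<Longrightarrow> card (g ` I) = card I"
  using bij_PG2 by (meson bij_betw_imp_inj_on card_image inj_on_subset)

lemma g_in_PG2_points: "x \<in> P \<Longrightarrow> g x \<in> PG2_points"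
  using bij_PG2 by (meson bij_betwE)

lemma image_g: "g ` P = PG2_points"
  using bij_PG2 by (simp add: bij_betw_def)

lemma g_eq_iff: "a \<in> P \<Longrightarrow> b \<in> P \<Longrightarrow> g a = g b \<longleftrightarrow> a = b"
  using bij_PG2 by (meson bij_betw_imp_inj_on inj_on_eq_iff)

lemma rank_triple_eq_3_iff_PG2:
  assumes "a \<in> P" "b \<in> P" "x \<in> P"
  shows "mrank M {a, b, x} = 3 \<longleftrightarrow> card {g a, g b, g x} = 3 \<and> indep PG2 {g a, g b, g x}"
proof -
  have sub: "{a, b, x} \<subseteq> P" using assms by simp
  show ?thesis
    using rank_triple_eq_3_iff card_image_g[OF sub] indep_iff_PG2[OF sub] by simp
qed

lemma rank_P: "mrank M P = 3"
proof -
  obtain I where I: "I \<subseteq> P" "indep M I" "card I = mrank M P" by (rule obtain_rank_witness)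
  then have "mrank M P \<le> 3"
    using indep_iff_PG2[OF I(1)] card_le_3_if_indep_PG2[of "g ` I"] card_image_g[OF I(1)] by simp
  moreover obtain J :: "('f ^ 3) set set" where J: "J \<subseteq> PG2_points" "card J = 3" "indep PG2 J"
    by (rule PG2_exists_indep_triple)
  with image_g obtain K where K: "K \<subseteq> P" "J = g ` K" using subset_image_iff[of J g P] by auto
  then have "indep M K" "card K = 3" using J indep_iff_PG2 card_image_g by auto
  then have "3 \<le> mrank M P" using card_le_rank[OF K(1)] by simp
  ultimately show ?thesis by simp
qed

lemma rank_pair_in_P:
  assumes "a \<in> P" "b \<in> P" "a \<noteq> b"
  shows "mrank M {a, b} = 2"
proof -
  have "indep PG2 {g a, g b}"
    using assms by (simp add: indep_PG2_pair g_in_PG2_points g_eq_iff)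
  then have "indep M {a, b}" using indep_iff_PG2[of "{a, b}"] assms by simp
  then show ?thesis using assms(3) by (simp add: rank_indep)
qed

lemma card_collinear_in_P:
  assumes S: "S \<subseteq> P" "mrank M S \<le> 2"
  shows "card S \<le> CARD('f) + 1"
proof -
  have "g ` S \<subseteq> PG2_points" using S(1) image_g by auto
  moreover have "\<not> indep PG2 T" if T: "T \<subseteq> g ` S" "card T = 3" for T
  proof
    assume "indep PG2 T"
    obtain I where I: "I \<subseteq> S" "T = g ` I" using T(1) by (meson subset_image_iff)
    with S \<open>indep PG2 T\<close> T(2) have "indep M I" "card I = 3"
      using indep_iff_PG2[of I] card_image_g[of I] by auto
    then show False using card_le_rank[OF I(1)] S(2) by simp
  qed
  ultimately have "card (g ` S) \<le> CARD('f) + 1"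
    by (rule PG2_card_collinear)
  then show ?thesis using card_image_g[OF S(1)] by simp
qed

lemma lines_meet_in_P:
  assumes abcd: "a \<in> P" "b \<in> P" "c \<in> P" "d \<in> P" "a \<noteq> b" "c \<noteq> d"
  shows "\<exists>x\<in>P. mrank M {a, b, x} \<le> 2 \<and> mrank M {c, d, x} \<le> 2"
proof -
  have "g a \<noteq> g b" "g c \<noteq> g d" using abcd by (simp_all add: g_eq_iff)
  then obtain X where X: "X \<in> PG2_points" "\<not> (card {g a, g b, X} = 3 \<and> indep PG2 {g a, g b, X})"
      "\<not> (card {g c, g d, X} = 3 \<and> indep PG2 {g c, g d, X})"
    using PG2_lines_meet[OF g_in_PG2_points[OF abcd(1)] g_in_PG2_points[OF abcd(2)]
        g_in_PG2_points[OF abcd(3)] g_in_PG2_points[OF abcd(4)]] by blast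
  then obtain x where x: "x \<in> P" "X = g x" using image_g by (metis imageE)
  have "mrank M {a, b, x} \<noteq> 3" "mrank M {c, d, x} \<noteq> 3"
    using X x rank_triple_eq_3_iff_PG2[OF abcd(1,2) x(1)] rank_triple_eq_3_iff_PG2[OF abcd(3,4) x(1)]
    by simp_all
  then have "mrank M {a, b, x} \<le> 2" "mrank M {c, d, x} \<le> 2"
    using rank_triple_le[of a b x] rank_triple_le[of c d x] by linarith+
  then show ?thesis using x by blast
qed

lemma card_noncollinear_in_P:
  assumes ab: "a \<in> P" "b \<in> P" "a \<noteq> b"
  shows "CARD('f) ^ 2 \<le> card {x \<in> P. mrank M {a, b, x} = 3}"
proof -
  have "g ` {x \<in> P. mrank M {a, b, x} = 3} =
      {X \<in> PG2_points. card {g a, g b, X} = 3 \<and> indep PG2 {g a, g b, X}}"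
  proof (intro equalityI subsetI)
    fix X assume "X \<in> g ` {x \<in> P. mrank M {a, b, x} = 3}"
    then obtain x where "x \<in> P" "mrank M {a, b, x} = 3" "X = g x" by blast
    then show "X \<in> {X \<in> PG2_points. card {g a, g b, X} = 3 \<and> indep PG2 {g a, g b, X}}"
      using rank_triple_eq_3_iff_PG2[OF ab(1,2)] g_in_PG2_points by blast
  next
    fix X assume X: "X \<in> {X \<in> PG2_points. card {g a, g b, X} = 3 \<and> indep PG2 {g a, g b, X}}"
    then obtain x where "x \<in> P" "X = g x" using image_g by (metis (no_types, lifting) imageE mem_Collect_eq)
    then show "X \<in> g ` {x \<in> P. mrank M {a, b, x} = 3}"
      using X rank_triple_eq_3_iff_PG2[OF ab(1,2)] by blast
  qed
  moreover have "card (g ` {x \<in> P. mrank M {a, b, x} = 3}) = card {x \<in> P. mrank M {a, b, x} = 3}"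
    by (rule card_image_g) blast
  moreover have "g a \<noteq> g b" using ab by (simp add: g_eq_iff)
  ultimately show ?thesis
    using PG2_card_noncollinear[OF g_in_PG2_points[OF ab(1)] g_in_PG2_points[OF ab(2)]] by simp
qed

end

sublocale PG2_restriction \<subseteq> proj_plane_restriction M P "CARD('f)"
  using PG2_subset_ground rank_P rank_pair_in_P card_collinear_in_P lines_meet_in_P card_noncollinear_in_P
  by unfold_locales

lemma PG2_restriction_if_has_restriction:
  assumes "matroid M" "has_restriction M (PG2 :: ('f::{field,finite} ^ 3) set matroid)"
  obtains P and g :: "'a \<Rightarrow> ('f::{field,finite} ^ 3) set" where "PG2_restriction M P g"
proof -
  obtain P and g :: "'a \<Rightarrow> ('f ^ 3) set" where P: "P \<subseteq> ground M" and g: "bij_betw g P PG2_points"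
    and gi: "\<forall>I. I \<subseteq> P \<longrightarrow> (indep M I \<and> I \<subseteq> P \<longleftrightarrow> indep PG2 (g ` I))"
    using assms(2) unfolding has_restriction_def matroid_iso_def by (auto simp: restrict_def PG2_def)
  have "PG2_restriction M P g"
    by (intro PG2_restriction.intro wf_matroid.intro PG2_restriction_axioms.intro assms(1) P g)
      (use gi in auto)
  then show ?thesis by (rule that)
qed

context proj_plane_restriction
begin

lemma finite_plane: "finite P"
  using plane_subset_ground finite_ground finite_subset by blast

lemma exists_other_point:
  obtains b where "b \<in> P" "b \<noteq> a"
proof -
  have "3 \<le> card P" using rank_le_card[OF finite_plane] rank_plane by simp
  then have "\<not> P \<subseteq> {a}" using card_mono[of "{a}" P] by auto
  then show ?thesis using that by blast
qed

lemma rank_point: "a \<in> P \<Longrightarrow> mrank M {a} = 1"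
proof -
  assume "a \<in> P"
  obtain b where b: "b \<in> P" "b \<noteq> a" by (rule exists_other_point)
  have "{a, b} = {a} \<union> {b}" by auto
  then have "mrank M {a, b} \<le> mrank M {a} + mrank M {b}"
    using rank_union_le[of "{a}" "{b}"] by (simp only:)
  then show "mrank M {a} = 1"
    using rank_pair[OF \<open>a \<in> P\<close> b(1)] b(2) rank_le_card[of "{a}"] rank_le_card[of "{b}"] by simp
qed

lemma rank_point_union_skew:
  assumes "skew M P C" "p \<in> P"
  shows "mrank M ({p} \<union> C) = 1 + mrank M C"
  using skew_subset[OF assms(1), of "{p}"] rank_point[OF assms(2)] assms(2) by (simp add: skew_def)

lemma exists_pair:
  obtains a b where "a \<in> P" "b \<in> P" "a \<noteq> b"
proof -
  have "P \<noteq> {}" using rank_plane rank_empty by auto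
  then obtain a where "a \<in> P" by blast
  moreover obtain b where "b \<in> P" "b \<noteq> a" by (rule exists_other_point)
  ultimately show ?thesis using that by blast
qed

lemma collinear_if_lines_through_point:
  assumes skew: "skew M P C"
    and e: "\<And>p. p \<in> P \<Longrightarrow> mrank M ({e, p} \<union> C) = 2 + mrank M C"
    and abcd: "a \<in> P" "b \<in> P" "c \<in> P" "d \<in> P" "a \<noteq> b" "c \<noteq> d"
    and abe: "mrank M ({a, b, e} \<union> C) \<le> 2 + mrank M C"
    and cde: "mrank M ({c, d, e} \<union> C) \<le> 2 + mrank M C"
  shows "mrank M {a, b, c, d} \<le> 2"
proof -
  have rank_C: "mrank M (S \<union> C) = mrank M S + mrank M C" if "S \<subseteq> P" for S
    using skew_subset[OF skew that] by (simp add: skew_def)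
  obtain x where x: "x \<in> P" "mrank M {a, b, x} \<le> 2" "mrank M {c, d, x} \<le> 2"
    using lines_meet[OF abcd] by blast
  have line: "mrank M (({u, v, x} \<union> C) \<union> ({u, v, e} \<union> C)) \<le> 2 + mrank M C"
    if "u \<in> P" "v \<in> P" "u \<noteq> v" "mrank M {u, v, x} \<le> 2" "mrank M ({u, v, e} \<union> C) \<le> 2 + mrank M C"
    for u v
  proof (rule rank_union_le_if_common)
    show "mrank M ({u, v, x} \<union> C) \<le> 2 + mrank M C"
      using rank_C[of "{u, v, x}"] that(1,2,4) x(1) by simp
    show "2 + mrank M C \<le> mrank M ({u, v} \<union> C)"
      using rank_C[of "{u, v}"] rank_pair[OF that(1-3)] that(1,2) by simp
  qed (use that(5) in auto)
  have "mrank M ((({a, b, x} \<union> C) \<union> ({a, b, e} \<union> C)) \<union> (({c, d, x} \<union> C) \<union> ({c, d, e} \<union> C)))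
      \<le> 2 + mrank M C"
  proof (rule rank_union_le_if_common)
    show "2 + mrank M C \<le> mrank M ({e, x} \<union> C)" using e[OF x(1)] by simp
    show "mrank M (({a, b, x} \<union> C) \<union> ({a, b, e} \<union> C)) \<le> 2 + mrank M C"
      by (rule line[OF abcd(1,2,5) x(2) abe])
    show "mrank M (({c, d, x} \<union> C) \<union> ({c, d, e} \<union> C)) \<le> 2 + mrank M C"
      by (rule line[OF abcd(3,4,6) x(3) cde])
  qed auto
  moreover have "mrank M ({a, b, c, d} \<union> C) \<le>
      mrank M ((({a, b, x} \<union> C) \<union> ({a, b, e} \<union> C)) \<union> (({c, d, x} \<union> C) \<union> ({c, d, e} \<union> C)))"
    by (rule rank_mono) auto
  ultimately have "mrank M ({a, b, c, d} \<union> C) \<le> 2 + mrank M C" by linarith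
  then show ?thesis using rank_C[of "{a, b, c, d}"] abcd by simp
qed

lemma exists_line_containing_lines_through_point:
  assumes skew: "skew M P C"
    and e: "\<And>p. p \<in> P \<Longrightarrow> mrank M ({e, p} \<union> C) = 2 + mrank M C"
  obtains a b where "a \<in> P" "b \<in> P" "a \<noteq> b"
    "\<And>c d. \<lbrakk>c \<in> P; d \<in> P; c \<noteq> d; mrank M ({c, d, e} \<union> C) \<le> 2 + mrank M C\<rbrakk> \<Longrightarrow>
       mrank M {a, b, c} \<le> 2 \<and> mrank M {a, b, d} \<le> 2"
proof (cases "\<exists>a b. a \<in> P \<and> b \<in> P \<and> a \<noteq> b \<and> mrank M ({a, b, e} \<union> C) \<le> 2 + mrank M C")
  case True
  then obtain a b where ab: "a \<in> P" "b \<in> P" "a \<noteq> b" "mrank M ({a, b, e} \<union> C) \<le> 2 + mrank M C"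
    by blast
  have "mrank M {a, b, c} \<le> 2 \<and> mrank M {a, b, d} \<le> 2"
    if "c \<in> P" "d \<in> P" "c \<noteq> d" "mrank M ({c, d, e} \<union> C) \<le> 2 + mrank M C" for c d
  proof -
    have "mrank M {a, b, c, d} \<le> 2"
      by (rule collinear_if_lines_through_point[OF skew e ab(1,2) that(1,2) ab(3) that(3) ab(4) that(4)])
    moreover have "mrank M {a, b, c} \<le> mrank M {a, b, c, d}" "mrank M {a, b, d} \<le> mrank M {a, b, c, d}"
      by (auto intro: rank_mono)
    ultimately show ?thesis by linarith
  qed
  then show ?thesis using that ab(1-3) by blast
next
  case False
  obtain a b where "a \<in> P" "b \<in> P" "a \<noteq> b" by (rule exists_pair)
  then show ?thesis using that False by blast
qed

lemma rank_insert_skew_point: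
  assumes skew: "skew M P C"
    and e: "\<And>p. p \<in> P \<Longrightarrow> mrank M ({e, p} \<union> C) = 2 + mrank M C"
  shows "mrank M (insert e C) = 1 + mrank M C"
proof -
  obtain a where "a \<in> P" using exists_pair by metis
  have "mrank M ({e, a} \<union> C) \<le> mrank M (insert e C) + 1"
    using rank_insert_le[of a "insert e C"] by (simp add: insert_commute)
  then show ?thesis using e[OF \<open>a \<in> P\<close>] rank_insert_le[of e C] by simp
qed

lemma plane_disjoint_insert_skew_point:
  assumes skew: "skew M P C"
    and e: "\<And>p. p \<in> P \<Longrightarrow> mrank M ({e, p} \<union> C) = 2 + mrank M C"
  shows "P \<inter> insert e C = {}"
proof -
  have "p \<noteq> e" if "p \<in> P" for p
    using e[OF that] rank_insert_skew_point[OF skew e] by (auto simp: insert_absorb)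
  moreover have "p \<notin> C" if "p \<in> P" for p
    using rank_point_union_skew[OF skew that] by (auto simp: insert_absorb)
  ultimately show ?thesis by blast
qed

lemma exists_uniform_set:
  assumes skew: "skew M P C"
    and e: "\<And>p. p \<in> P \<Longrightarrow> mrank M ({e, p} \<union> C) = 2 + mrank M C"
    and spans: "mrank M (insert e (P \<union> C)) = mrank M (P \<union> C)"
  obtains R where "R \<subseteq> P" "R \<inter> insert e C = {}" "card R = q ^ 2 + 1"
    "\<And>I. I \<subseteq> R \<Longrightarrow> mrank M (I \<union> insert e C) = card I + mrank M (insert e C) \<longleftrightarrow> card I \<le> 2"
proof -
  have rank_PC: "mrank M (insert e (P \<union> C)) = 2 + mrank M (insert e C)"
    using spans skew rank_plane rank_insert_skew_point[OF skew e] by (simp add: skew_def)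
  obtain a b where ab: "a \<in> P" "b \<in> P" "a \<noteq> b"
    and through: "\<And>c d. \<lbrakk>c \<in> P; d \<in> P; c \<noteq> d; mrank M ({c, d, e} \<union> C) \<le> 2 + mrank M C\<rbrakk> \<Longrightarrow>
       mrank M {a, b, c} \<le> 2 \<and> mrank M {a, b, d} \<le> 2"
    using exists_line_containing_lines_through_point[OF skew e] by metis
  define G where "G = {x \<in> P. mrank M {a, b, x} = 3}"
  have "q ^ 2 \<le> card G" unfolding G_def by (rule card_noncollinear[OF ab])
  then obtain G' where G': "G' \<subseteq> G" "card G' = q ^ 2" by (meson obtain_subset_with_card_n)
  have "a \<notin> G" using rank_pair[OF ab] by (simp add: G_def insert_commute)
  text \<open>No two points of R lie on a line through e, as at least one of them is off the line ab.\<close>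
  define R where "R = insert a G'"
  have RP: "R \<subseteq> P" using G' ab(1) by (auto simp: R_def G_def)
  have "finite R" using RP finite_plane finite_subset by blast
  have "a \<notin> G'" using G'(1) \<open>a \<notin> G\<close> by blast
  then have "card R = q ^ 2 + 1"
    using G'(2) \<open>finite R\<close> by (simp add: R_def)
  have rank_eC: "mrank M (insert e C) = 1 + mrank M C" by (rule rank_insert_skew_point[OF skew e])
  have points: "mrank M ({p} \<union> insert e C) = 1 + mrank M (insert e C)" if "p \<in> R" for p
    using e[of p] that RP rank_eC by auto
  have pairs: "mrank M ({c, d} \<union> insert e C) = 2 + mrank M (insert e C)"
    if cd: "c \<in> R" "d \<in> R" "c \<noteq> d" for c d
  proof -
    have "c \<in> G \<or> d \<in> G" using cd G'(1) by (auto simp: R_def)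
    then have "\<not> (mrank M {a, b, c} \<le> 2 \<and> mrank M {a, b, d} \<le> 2)" by (auto simp: G_def)
    then have "2 + mrank M C < mrank M ({c, d, e} \<union> C)" using through cd RP by fastforce
    moreover have "mrank M ({c, d} \<union> insert e C) \<le> mrank M (insert e (P \<union> C))"
      using cd RP by (intro rank_mono) auto
    moreover have "{c, d, e} \<union> C = {c, d} \<union> insert e C" by auto
    ultimately show ?thesis using rank_PC rank_eC by simp
  qed
  have bound: "mrank M (I \<union> insert e C) \<le> 2 + mrank M (insert e C)" if "I \<subseteq> R" for I
  proof -
    have "mrank M (I \<union> insert e C) \<le> mrank M (insert e (P \<union> C))"
      using that RP by (intro rank_mono) auto
    then show ?thesis using rank_PC by simp
  qed
  have "R \<inter> insert e C = {}" using plane_disjoint_insert_skew_point[OF skew e] RP by blast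
  then show ?thesis
    using that RP \<open>card R = q ^ 2 + 1\<close> rank_contract_uniform_2[OF points pairs bound \<open>finite R\<close>] by blast
qed

end

locale plane_and_long_line = proj_plane_restriction +
  fixes L :: "'a set"
  assumes long_line_subset_ground: "L \<subseteq> ground M"
    and card_long_line: "card L = q + 2"
    and indep_long_line_iff: "\<And>I. I \<subseteq> L \<Longrightarrow> indep M I \<longleftrightarrow> card I \<le> 2"
begin

lemma rank_long_line: "mrank M L = 2"
proof -
  obtain I where "I \<subseteq> L" "indep M I" "card I = mrank M L" by (rule obtain_rank_witness)
  then have "mrank M L \<le> 2" using indep_long_line_iff by auto
  moreover obtain J where "J \<subseteq> L" "card J = 2"
    using obtain_subset_with_card_n[of 2 L] card_long_line by auto
  then have "2 \<le> mrank M L" using card_le_rank[of J L] indep_long_line_iff[of J] by simp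
  ultimately show ?thesis by simp
qed

lemma exists_spanning_skew_set:
  assumes "round_matroid M"
  obtains C where "C \<subseteq> ground M" "skew M P C" "skew M L C"
    "\<And>x. x \<in> ground M \<Longrightarrow> mrank M (insert x (P \<union> C)) = mrank M (P \<union> C)"
proof -
  obtain C where C: "C \<subseteq> ground M" "skew M P C" "skew M L C"
    and cover: "ground M \<subseteq> mclosure M (P \<union> C) \<union> mclosure M (L \<union> C)"
    by (rule exists_skew_covering)
  have "mrank M (P \<union> C) \<le> matroid_rank M"
    unfolding matroid_rank_def using C(1) plane_subset_ground by (intro rank_mono) auto
  moreover have "mrank M (L \<union> C) < mrank M (P \<union> C)"
    using C(2,3) rank_plane rank_long_line by (simp add: skew_def)
  ultimately have max: "matroid_rank M \<le> mrank M (P \<union> C)"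
    using round_matroid_rank_cover[OF assms cover] by linarith
  have "mrank M (insert x (P \<union> C)) = mrank M (P \<union> C)" if "x \<in> ground M" for x
  proof -
    have "mrank M (insert x (P \<union> C)) \<le> matroid_rank M"
      unfolding matroid_rank_def using that C(1) plane_subset_ground by (intro rank_mono) auto
    moreover have "mrank M (P \<union> C) \<le> mrank M (insert x (P \<union> C))" by (rule rank_mono) auto
    ultimately show ?thesis using max by linarith
  qed
  then show ?thesis using that C by blast
qed

lemma rank_long_line_point_union_skew:
  assumes "skew M L C" "e \<in> L"
  shows "mrank M ({e} \<union> C) = 1 + mrank M C"
  using skew_subset[OF assms(1), of "{e}"] indep_long_line_iff[of "{e}"] rank_indep[of "{e}"] assms(2)
  by (simp add: skew_def)

text \<open>Otherwise a choice of parallel points is an injection of L into P whose image lies in the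
  closure of L \<union> C, that is, on a line of P.\<close>
lemma exists_long_line_point_not_parallel:
  assumes skewP: "skew M P C" and skewL: "skew M L C"
  obtains e where "e \<in> L" "\<And>p. p \<in> P \<Longrightarrow> mrank M ({e, p} \<union> C) \<noteq> 1 + mrank M C"
proof (rule ccontr)
  assume "\<not> thesis"
  then have "\<forall>e\<in>L. \<exists>p\<in>P. mrank M ({e, p} \<union> C) = 1 + mrank M C" using that by blast
  then obtain f where f: "\<And>e. e \<in> L \<Longrightarrow> f e \<in> P"
    and parallel: "\<And>e. e \<in> L \<Longrightarrow> mrank M ({e, f e} \<union> C) = 1 + mrank M C"
    by metis
  have "inj_on f L"
  proof (rule inj_onI, rule ccontr)
    fix e e' assume e: "e \<in> L" "e' \<in> L" "f e = f e'" "e \<noteq> e'"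
    have "mrank M (({e, f e} \<union> C) \<union> ({e', f e} \<union> C)) \<le> 1 + mrank M C"
    proof (rule rank_union_le_if_common)
      show "mrank M ({e, f e} \<union> C) \<le> 1 + mrank M C" using parallel[OF e(1)] by simp
      show "mrank M ({e', f e} \<union> C) \<le> 1 + mrank M C" using parallel[OF e(2)] e(3) by simp
      show "1 + mrank M C \<le> mrank M ({f e} \<union> C)"
        using rank_point_union_skew[OF skewP f(1)[OF e(1)]] by simp
    qed auto
    moreover have "mrank M ({e, e'} \<union> C) \<le> mrank M (({e, f e} \<union> C) \<union> ({e', f e} \<union> C))"
      by (rule rank_mono) auto
    moreover have "mrank M ({e, e'} \<union> C) = 2 + mrank M C"
      using skew_subset[OF skewL, of "{e, e'}"] indep_long_line_iff[of "{e, e'}"] rank_indep[of "{e, e'}"] e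
      by (simp add: skew_def)
    ultimately show False by simp
  qed
  have "mrank M (insert p (L \<union> C)) = mrank M (L \<union> C)" if "p \<in> f ` L" for p
  proof -
    obtain e where e: "e \<in> L" "p = f e" using \<open>p \<in> f ` L\<close> by blast
    have "mrank M (insert p ({e} \<union> C)) = mrank M ({e} \<union> C)"
      using parallel[OF e(1)] rank_long_line_point_union_skew[OF skewL e(1)] e(2)
      by (simp add: insert_commute)
    then show ?thesis by (rule rank_insert_eq_mono) (use e(1) in auto)
  qed
  moreover have "finite (f ` L)"
    using long_line_subset_ground finite_ground finite_subset by blast
  ultimately have "mrank M ((L \<union> C) \<union> f ` L) = mrank M (L \<union> C)"
    by (intro rank_union_eq_if_insert_eq) auto
  moreover have "mrank M (f ` L \<union> C) \<le> mrank M ((L \<union> C) \<union> f ` L)" by (rule rank_mono) auto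
  moreover have "f ` L \<subseteq> P" using f by blast
  ultimately have "mrank M (f ` L) \<le> 2"
    using skew_subset[OF skewP \<open>f ` L \<subseteq> P\<close>] skewL rank_long_line by (simp add: skew_def)
  then have "card (f ` L) \<le> q + 1" using card_collinear \<open>f ` L \<subseteq> P\<close> by blast
  then show False using card_image[OF \<open>inj_on f L\<close>] card_long_line by simp
qed

lemma exists_long_line_point_skew:
  assumes skewP: "skew M P C" and skewL: "skew M L C"
  obtains e where "e \<in> L" "\<And>p. p \<in> P \<Longrightarrow> mrank M ({e, p} \<union> C) = 2 + mrank M C"
proof -
  obtain e where e: "e \<in> L" "\<And>p. p \<in> P \<Longrightarrow> mrank M ({e, p} \<union> C) \<noteq> 1 + mrank M C"
    using exists_long_line_point_not_parallel[OF skewP skewL] by metis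
  have "mrank M ({e, p} \<union> C) = 2 + mrank M C" if "p \<in> P" for p
  proof -
    have "mrank M ({e} \<union> C) \<le> mrank M ({e, p} \<union> C)" by (rule rank_mono) auto
    moreover have "mrank M (insert e ({p} \<union> C)) \<le> mrank M ({p} \<union> C) + 1" by (rule rank_insert_le)
    ultimately show ?thesis
      using e(2)[OF that] rank_point_union_skew[OF skewP that]
        rank_long_line_point_union_skew[OF skewL e(1)] by simp
  qed
  then show ?thesis using that e(1) by blast
qed

theorem round_has_uniform_minor:
  assumes "round_matroid M"
  shows "has_minor M (uniform 2 (q ^ 2 + 1))"
proof -
  obtain C where C: "C \<subseteq> ground M" "skew M P C" "skew M L C"
    and spans: "\<And>x. x \<in> ground M \<Longrightarrow> mrank M (insert x (P \<union> C)) = mrank M (P \<union> C)"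
    using exists_spanning_skew_set[OF assms] by metis
  obtain e where e: "e \<in> L" "\<And>p. p \<in> P \<Longrightarrow> mrank M ({e, p} \<union> C) = 2 + mrank M C"
    using exists_long_line_point_skew[OF C(2,3)] by metis
  have "mrank M (insert e (P \<union> C)) = mrank M (P \<union> C)"
    using spans e(1) long_line_subset_ground by blast
  then obtain R where R: "R \<subseteq> P" "R \<inter> insert e C = {}" "card R = q ^ 2 + 1"
      "\<And>I. I \<subseteq> R \<Longrightarrow> mrank M (I \<union> insert e C) = card I + mrank M (insert e C) \<longleftrightarrow> card I \<le> 2"
    using exists_uniform_set[OF C(2) e(2)] by metis
  have "insert e C \<subseteq> ground M" "R \<subseteq> ground M"
    using C(1) e(1) long_line_subset_ground R(1) plane_subset_ground by auto
  then show ?thesis using has_minor_uniformI R(2-4) by blast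
qed

end

theorem lemma2p2:
  fixes M :: "'a matroid"
  assumes "matroid M"
    and "round_matroid M"
    and "has_restriction M (uniform 2 (CARD('f::{field,finite}) + 2))"
    and "has_restriction M (PG2 :: ('f ^ 3) set matroid)"
  shows "has_minor M (uniform 2 (CARD('f) ^ 2 + 1))"
proof -
  interpret wf_matroid M by (rule wf_matroid.intro) (fact assms(1))
  obtain L where L: "L \<subseteq> ground M" "card L = CARD('f) + 2" "\<And>I. I \<subseteq> L \<Longrightarrow> indep M I \<longleftrightarrow> card I \<le> 2"
    using has_restriction_uniformE[OF assms(3)] by metis
  obtain P and g :: "'a \<Rightarrow> ('f ^ 3) set" where "PG2_restriction M P g"
    by (rule PG2_restriction_if_has_restriction[OF assms(1,4)])
  then interpret PG2_restriction M P g .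
  interpret plane_and_long_line M P "CARD('f)" L
    by unfold_locales (fact L)+
  show ?thesis by (rule round_has_uniform_minor[OF assms(2)])
qed

end
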